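(* Let $B>0$ and $0<C<\sqrt{2}\,B$. On $\ell^2(\mathbb{N}_0)$ with standard orthonormal basis $(e_k)_{k\ge 0}$, let $H$ be the bounded self-adjoint Jacobi operator with zero diagonal and off-diagonal entries $(C,B,B,\dots)$, i.e. $$H e_0=C e_1,\qquad H e_1=C e_0+B e_2,\qquad H e_k=B e_{k-1}+B e_{k+1}\ (k\ge 2).$$ Let $P=\sum_{k=0}^{\infty}\big(e_{2k}e_{2k}^\dagger-e_{2k+1}e_{2k+1}^\dagger\big)$, i.e. $Pe_k=(-1)^k e_k$. Fix a finite index $j\ge 0$ and let $\psi(t)=e^{-iHt}e_j$. Then $$\lim_{t\to+\infty}\langle P(t)\rangle=\lim_{t\to+\infty}\langle\psi(t),P\psi(t)\rangle=0 .$$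
   Context: Units with $\hbar=1$; $\langle P(t)\rangle$ is the expectation value of the parity-like operator $P$ (the "even-odd difference") in the time-evolved state $e^{-iHt}e_j$. *)

theory Defs
  imports "HOL-Analysis.Analysis"
begin

definition jac_entry :: "real \<Rightarrow> real \<Rightarrow> nat \<Rightarrow> nat \<Rightarrow> real" where
  "jac_entry B C k l =
     (if k = Suc l \<or> l = Suc k then (if min k l = 0 then C else B) else 0)"

definition jac_apply :: "real \<Rightarrow> real \<Rightarrow> (nat \<Rightarrow> complex) \<Rightarrow> nat \<Rightarrow> complex" where
  "jac_apply B C v k =
     (if k = 0 then 0 else complex_of_real (jac_entry B C k (k - 1)) * v (k - 1))
     + complex_of_real (jac_entry B C k (Suc k)) * v (Suc k)"

definition basis_vec :: "nat \<Rightarrow> nat \<Rightarrow> complex" where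
  "basis_vec j k = (if k = j then 1 else 0)"

text \<open>psi(t) = exp(-iHt) e_j, via the (norm-convergent) exponential series of the
  bounded operator H, read coordinatewise: psi(t)_k = sum_n (-it)^n/n! (H^n e_j)_k.\<close>
definition psi :: "real \<Rightarrow> real \<Rightarrow> nat \<Rightarrow> real \<Rightarrow> nat \<Rightarrow> complex" where
  "psi B C j t k =
     (\<Sum>n. ((- \<i> * complex_of_real t) ^ n / of_nat (fact n)) *
           ((jac_apply B C ^^ n) (basis_vec j) k))"

definition parity_expect :: "real \<Rightarrow> real \<Rightarrow> nat \<Rightarrow> real \<Rightarrow> real" where
  "parity_expect B C j t = (\<Sum>k. (-1) ^ k * (cmod (psi B C j t k))\<^sup>2)"

end

theory Submission
  imports Defs "HOL-Complex_Analysis.Complex_Analysis"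
begin

(* The parity P anticommutes with H, because H only couples neighbouring sites. Hence
   P exp(-iHt) = exp(iHt) P and <psi(t), P psi(t)> = (-1)^j Re <e_j, exp(2iHt) e_j>.

   Explicit generalized eigenfunctions of H, built from the Jost function 1 + rho exp(2i theta) with
   rho = 1 - C^2/B^2, are orthonormal on [0, 2 pi]; this identifies the spectral measure of H at e_j:
   <e_j, f(H) e_j> = (1 / 4 pi) int_0^(2 pi) f(2B cos theta) w_j(theta) d theta.  Since |rho| < 1,
   which is the hypothesis C < sqrt 2 B, the weight w_j is smooth and of the form sin theta * G_j(theta)
   with G_j(0) = G_j(2 pi) = 0, so integrating the oscillatory integral
   int exp(4iBt cos theta) w_j(theta) d theta by parts shows that it is O(1/t). *)

section \<open>The Jacobi matrix and the parity operator\<close>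

lemma jac_entry_commute: "jac_entry B C k l = jac_entry B C l k"
  unfolding jac_entry_def by (auto simp: min.commute)

lemma jac_entry_nonzero_imp_adjacent: "jac_entry B C k l \<noteq> 0 \<Longrightarrow> k = Suc l \<or> l = Suc k"
  unfolding jac_entry_def by (auto split: if_splits)

lemma abs_jac_entry_le: "\<bar>jac_entry B C k l\<bar> \<le> max \<bar>B\<bar> \<bar>C\<bar>"
  unfolding jac_entry_def by auto

lemma sum_jac_entry_mult:
  fixes u :: "nat \<Rightarrow> 'a::real_algebra_1"
  shows "(\<Sum>l<N. of_real (jac_entry B C k l) * u l) =
    (if 0 < k \<and> k - 1 < N then of_real (jac_entry B C k (k - 1)) * u (k - 1) else 0) +
    (if k + 1 < N then of_real (jac_entry B C k (k + 1)) * u (k + 1) else 0)"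
proof -
  let ?h = "\<lambda>l. of_real (jac_entry B C k l) * u l"
  have "(\<Sum>l<N. ?h l) = (\<Sum>l\<in>{..<N} \<inter> ({k + 1} \<union> (if 0 < k then {k - 1} else {})). ?h l)"
    by (rule sum.mono_neutral_right) (auto simp: jac_entry_def split: if_splits)
  also have "\<dots> = (if 0 < k \<and> k - 1 < N then ?h (k - 1) else 0) + (if k + 1 < N then ?h (k + 1) else 0)"
    by (cases "k = 0"; cases "k + 1 < N"; cases "k - 1 < N") (auto simp: insert_commute Int_insert_left)
  finally show ?thesis .
qed

lemma jac_apply_eq_sum_if_vanishing:
  assumes "\<forall>l\<ge>N. u l = 0"
  shows "jac_apply B C u k = (\<Sum>l<N. of_real (jac_entry B C k l) * u l)"
  unfolding sum_jac_entry_mult using assms by (auto simp: jac_apply_def)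

lemma jac_apply_eq_sum_if_interior:
  assumes "k + 2 \<le> N"
  shows "jac_apply B C u k = (\<Sum>l<N. of_real (jac_entry B C k l) * u l)"
  unfolding sum_jac_entry_mult using assms by (auto simp: jac_apply_def)

lemma parity_sum_jac_apply:
  fixes u w :: "nat \<Rightarrow> complex"
  assumes u: "\<forall>l. K \<le> Suc l \<longrightarrow> u l = 0" and w: "\<forall>l. K \<le> Suc l \<longrightarrow> w l = 0"
  shows "(\<Sum>k<K. (-1)^k * jac_apply B C u k * w k) = - (\<Sum>k<K. (-1)^k * u k * jac_apply B C w k)"
proof -
  have u': "\<forall>l\<ge>K. u l = 0" and w': "\<forall>l\<ge>K. w l = 0"
    using u w by auto
  have sign: "(-1)^k * of_real (jac_entry B C k l) * u l * w k =
      - ((-1)^l * u l * (of_real (jac_entry B C l k) * w k))" for k l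
  proof (cases "jac_entry B C k l = 0")
    case True
    then show ?thesis by (simp add: jac_entry_commute[of B C k l])
  next
    case False
    then have "k = Suc l \<or> l = Suc k" by (rule jac_entry_nonzero_imp_adjacent)
    then show ?thesis by (auto simp: jac_entry_commute[of B C k l])
  qed
  have "(\<Sum>k<K. (-1)^k * jac_apply B C u k * w k)
      = (\<Sum>k<K. \<Sum>l<K. (-1)^k * of_real (jac_entry B C k l) * u l * w k)"
    by (simp add: jac_apply_eq_sum_if_vanishing[OF u'] sum_distrib_left sum_distrib_right mult.assoc)
  also have "\<dots> = (\<Sum>l<K. \<Sum>k<K. - ((-1)^l * u l * (of_real (jac_entry B C l k) * w k)))"
    by (subst sum.swap) (simp only: sign)
  also have "\<dots> = - (\<Sum>k<K. (-1)^k * u k * jac_apply B C w k)"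
    by (simp add: jac_apply_eq_sum_if_vanishing[OF w'] sum_distrib_left sum_negf)
  finally show ?thesis .
qed

definition jac_orbit :: "real \<Rightarrow> real \<Rightarrow> nat \<Rightarrow> nat \<Rightarrow> nat \<Rightarrow> complex" where
  "jac_orbit B C j n = (jac_apply B C ^^ n) (basis_vec j)"

lemma jac_orbit_0: "jac_orbit B C j 0 = basis_vec j"
  by (simp add: jac_orbit_def)

lemma jac_orbit_Suc: "jac_orbit B C j (Suc n) = jac_apply B C (jac_orbit B C j n)"
  by (simp add: jac_orbit_def)

lemma jac_orbit_eq_0: "j + n < k \<Longrightarrow> jac_orbit B C j n k = 0"
proof (induction n arbitrary: k)
  case 0
  then show ?case by (simp add: jac_orbit_0 basis_vec_def)
next
  case (Suc n)
  then show ?case by (auto simp: jac_orbit_Suc jac_apply_def)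
qed

lemma cnj_jac_orbit: "cnj (jac_orbit B C j n k) = jac_orbit B C j n k"
proof (induction n arbitrary: k)
  case 0
  then show ?case by (simp add: jac_orbit_0 basis_vec_def)
next
  case (Suc n)
  then show ?case by (simp add: jac_orbit_Suc jac_apply_def)
qed

lemma norm_jac_orbit_le: "norm (jac_orbit B C j n k) \<le> (2 * max \<bar>B\<bar> \<bar>C\<bar>) ^ n"
proof (induction n arbitrary: k)
  case 0
  then show ?case by (simp add: jac_orbit_0 basis_vec_def)
next
  case (Suc n)
  let ?M = "max \<bar>B\<bar> \<bar>C\<bar>"
  have term_le: "norm (of_real (jac_entry B C k l) * jac_orbit B C j n l) \<le> ?M * (2 * ?M) ^ n" for l
    unfolding norm_mult norm_of_real
    by (rule mult_mono) (use abs_jac_entry_le Suc.IH in auto)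
  have "norm (jac_orbit B C j (Suc n) k) \<le>
      norm (if k = 0 then 0 else of_real (jac_entry B C k (k - 1)) * jac_orbit B C j n (k - 1))
      + norm (of_real (jac_entry B C k (Suc k)) * jac_orbit B C j n (Suc k))"
    unfolding jac_orbit_Suc jac_apply_def by (rule norm_triangle_ineq)
  also have "\<dots> \<le> ?M * (2 * ?M) ^ n + ?M * (2 * ?M) ^ n"
    by (rule add_mono) (use term_le in auto)
  also have "\<dots> = (2 * ?M) ^ Suc n"
    by simp
  finally show ?case .
qed

lemma parity_sum_jac_orbit:
  assumes "j + n + m + 2 \<le> K"
  shows "(\<Sum>k<K. (-1)^k * jac_orbit B C j n k * jac_orbit B C j m k) = (-1)^(n + j) * jac_orbit B C j (n + m) j"
  using assms
proof (induction n arbitrary: m)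
  case 0
  have "(\<Sum>k<K. (-1)^k * basis_vec j k * jac_orbit B C j m k) =
      (\<Sum>k\<in>{j}. (-1)^k * basis_vec j k * jac_orbit B C j m k)"
    by (rule sum.mono_neutral_right) (use 0 in \<open>auto simp: basis_vec_def\<close>)
  then show ?case by (simp add: jac_orbit_0 basis_vec_def)
next
  case (Suc n)
  have "(\<Sum>k<K. (-1)^k * jac_orbit B C j (Suc n) k * jac_orbit B C j m k)
     = - (\<Sum>k<K. (-1)^k * jac_orbit B C j n k * jac_orbit B C j (Suc m) k)"
    unfolding jac_orbit_Suc
    by (rule parity_sum_jac_apply) (use Suc.prems in \<open>auto intro!: jac_orbit_eq_0\<close>)
  also have "\<dots> = - ((-1)^(n + j) * jac_orbit B C j (n + Suc m) j)"
    using Suc.IH[of "Suc m"] Suc.prems by simp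
  finally show ?case by simp
qed

section \<open>The parity expectation as a power series in \<open>t\<close>\<close>

lemma summable_power_div_fact: "summable (\<lambda>n. x ^ n / fact n :: real)"
  using summable_exp[of x] by (simp add: field_simps)

lemma sum_exp_coeffs:
  fixes x y :: "'a::field_char_0"
  shows "(\<Sum>n\<le>N. x^n / fact n * (y^(N - n) / fact (N - n))) = (x + y)^N / fact N"
proof -
  have "(x + y)^N = (\<Sum>n\<le>N. of_nat (N choose n) * x^n * y^(N - n))"
    by (rule binomial_ring)
  also have "\<dots> = fact N * (\<Sum>n\<le>N. x^n / fact n * (y^(N - n) / fact (N - n)))"
    unfolding sum_distrib_left
  proof (intro sum.cong refl)
    fix n assume "n \<in> {..N}"
    then show "of_nat (N choose n) * x^n * y^(N - n) = fact N * (x^n / fact n * (y^(N - n) / fact (N - n)))"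
      by (simp add: binomial_fact)
  qed
  finally show ?thesis by simp
qed

definition psi_coeff :: "real \<Rightarrow> real \<Rightarrow> nat \<Rightarrow> real \<Rightarrow> nat \<Rightarrow> nat \<Rightarrow> complex" where
  "psi_coeff B C j t k n = (- \<i> * complex_of_real t) ^ n / of_nat (fact n) * jac_orbit B C j n k"

definition psi_sq_coeff :: "real \<Rightarrow> real \<Rightarrow> nat \<Rightarrow> real \<Rightarrow> nat \<Rightarrow> nat \<Rightarrow> complex" where
  "psi_sq_coeff B C j t k N = (\<Sum>n\<le>N. psi_coeff B C j t k n * cnj (psi_coeff B C j t k (N - n)))"

lemma psi_eq_suminf_psi_coeff: "psi B C j t k = (\<Sum>n. psi_coeff B C j t k n)"
  by (simp add: psi_def psi_coeff_def jac_orbit_def)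

lemma norm_psi_coeff_le:
  fixes B C t :: real
  defines "X \<equiv> \<bar>t\<bar> * (2 * max \<bar>B\<bar> \<bar>C\<bar>)"
  shows "norm (psi_coeff B C j t k n) \<le> X ^ n / fact n"
proof -
  have "norm (psi_coeff B C j t k n) = \<bar>t\<bar>^n / fact n * norm (jac_orbit B C j n k)"
    by (simp add: psi_coeff_def norm_mult norm_divide norm_power)
  also have "\<dots> \<le> \<bar>t\<bar>^n / fact n * (2 * max \<bar>B\<bar> \<bar>C\<bar>)^n"
    by (intro mult_left_mono norm_jac_orbit_le) auto
  finally show ?thesis by (simp add: X_def power_mult_distrib)
qed

lemma psi_coeff_eq_0: "j + n < k \<Longrightarrow> psi_coeff B C j t k n = 0"
  by (simp add: psi_coeff_def jac_orbit_eq_0)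

lemma norm_psi_sq_coeff_le:
  fixes B C t :: real
  defines "X \<equiv> \<bar>t\<bar> * (2 * max \<bar>B\<bar> \<bar>C\<bar>)"
  shows "norm (psi_sq_coeff B C j t k N) \<le> (2 * X)^N / fact N"
proof -
  have "norm (psi_sq_coeff B C j t k N) \<le>
      (\<Sum>n\<le>N. norm (psi_coeff B C j t k n * cnj (psi_coeff B C j t k (N - n))))"
    unfolding psi_sq_coeff_def by (rule norm_sum)
  also have "\<dots> \<le> (\<Sum>n\<le>N. X^n / fact n * (X^(N - n) / fact (N - n)))"
    unfolding norm_mult complex_mod_cnj X_def
    by (intro sum_mono mult_mono norm_psi_coeff_le) simp_all
  also have "\<dots> = (X + X)^N / fact N"
    by (rule sum_exp_coeffs)
  finally show ?thesis
    by (simp only: mult_2)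
qed

lemma psi_sq_coeff_eq_0: "j + N < k \<Longrightarrow> psi_sq_coeff B C j t k N = 0"
  unfolding psi_sq_coeff_def by (intro sum.neutral) (auto simp: psi_coeff_eq_0)

lemma psi_sq_coeff_has_sum: "((\<lambda>N. psi_sq_coeff B C j t k N) has_sum (psi B C j t k * cnj (psi B C j t k))) UNIV"
proof (rule norm_summable_imp_has_sum)
  have abs_summable: "summable (\<lambda>n. norm (psi_coeff B C j t k n))"
    by (rule summable_comparison_test[OF _ summable_power_div_fact[of "\<bar>t\<bar> * (2 * max \<bar>B\<bar> \<bar>C\<bar>)"]])
      (simp add: norm_psi_coeff_le)
  then have "(\<lambda>n. psi_coeff B C j t k n) sums psi B C j t k"
    unfolding psi_eq_suminf_psi_coeff by (rule summable_sums[OF summable_norm_cancel])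
  then have "(\<Sum>n. cnj (psi_coeff B C j t k n)) = cnj (psi B C j t k)"
    by (intro sums_unique[symmetric]) (simp add: sums_cnj)
  moreover have "(\<lambda>N. psi_sq_coeff B C j t k N) sums
      ((\<Sum>n. psi_coeff B C j t k n) * (\<Sum>n. cnj (psi_coeff B C j t k n)))"
    unfolding psi_sq_coeff_def by (rule Cauchy_product_sums) (use abs_summable in simp_all)
  ultimately show "(\<lambda>N. psi_sq_coeff B C j t k N) sums (psi B C j t k * cnj (psi B C j t k))"
    by (simp add: psi_eq_suminf_psi_coeff)
  show "summable (\<lambda>N. norm (psi_sq_coeff B C j t k N))"
    by (rule summable_comparison_test'[OF summable_power_div_fact[of "2 * (\<bar>t\<bar> * (2 * max \<bar>B\<bar> \<bar>C\<bar>))"]])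
      (simp only: real_norm_def abs_norm_cancel norm_psi_sq_coeff_le)
qed

lemma summable_on_geometric_exp_series:
  fixes x :: real
  assumes "0 \<le> x"
  shows "(\<lambda>(k, N). (1/2)^k * (x^N / fact N)) summable_on UNIV \<times> UNIV"
proof -
  have "(\<lambda>N. x^N / fact N) sums exp x"
    using exp_converges[of x] by (simp add: divide_inverse_commute)
  then have "((\<lambda>N. (1/2)^k * (x^N / fact N)) has_sum ((1/2)^k * exp x)) UNIV" for k
    using assms by (intro sums_nonneg_imp_has_sum sums_mult) auto
  moreover have "(\<lambda>k. (1/2)^k * exp x) summable_on UNIV"
    using summable_mult2[OF summable_geometric[of "1/2::real"], of "exp x"]
    by (subst summable_on_UNIV_nonneg_real_iff) auto
  ultimately show ?thesis
    using assms by (intro summable_on_SigmaI[where g = "\<lambda>k. (1/2)^k * exp x"]) auto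
qed

lemma norm_parity_psi_sq_coeff_le:
  fixes B C t :: real
  defines "X \<equiv> \<bar>t\<bar> * (2 * max \<bar>B\<bar> \<bar>C\<bar>)"
  shows "norm ((-1)^k * psi_sq_coeff B C j t k N) \<le> 2^j * ((1/2)^k * ((4 * X)^N / fact N))"
proof (cases "k \<le> j + N")
  case True
  have "1 \<le> (2::real)^(j + N) * (1/2)^k"
    using True by (simp add: power_one_over field_simps power_increasing)
  then have "(2 * X)^N / fact N \<le> (2 * X)^N / fact N * ((2::real)^(j + N) * (1/2)^k)"
    using mult_left_mono[of 1 _ "(2 * X)^N / fact N"] by (simp add: X_def)
  also have "\<dots> = 2^j * ((1/2)^k * ((4 * X)^N / fact N))"
  proof -
    have four: "(4 * X)^N = 2^N * (2 * X)^N"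
      unfolding power_mult_distrib[symmetric] by simp
    show ?thesis
      unfolding four by (simp add: power_add)
  qed
  finally show ?thesis
    using norm_psi_sq_coeff_le[of B C j t k N] by (simp add: X_def norm_mult norm_power)
qed (simp add: psi_sq_coeff_eq_0 X_def)

lemma summable_on_parity_psi_sq_coeff:
  "(\<lambda>(k, N). (-1)^k * psi_sq_coeff B C j t k N) summable_on UNIV \<times> UNIV"
proof -
  define X where "X = \<bar>t\<bar> * (2 * max \<bar>B\<bar> \<bar>C\<bar>)"
  define g where "g = (\<lambda>p. 2^j * (case p of (k, N) \<Rightarrow> (1/2)^k * ((4 * X)^N / fact N)) :: real)"
  have g_nonneg: "0 \<le> g p" for p
    by (simp add: g_def X_def case_prod_unfold)
  have "g summable_on UNIV \<times> UNIV"
    unfolding g_def by (rule summable_on_cmult_right[OF summable_on_geometric_exp_series]) (simp add: X_def)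
  then have "(\<lambda>p. norm (g p)) summable_on UNIV \<times> UNIV"
    using g_nonneg by simp
  then have "(\<lambda>p. norm ((-1)^fst p * psi_sq_coeff B C j t (fst p) (snd p))) summable_on UNIV \<times> UNIV"
  proof (rule Infinite_Sum.abs_summable_on_comparison_test)
    fix p :: "nat \<times> nat"
    show "norm ((-1)^fst p * psi_sq_coeff B C j t (fst p) (snd p)) \<le> norm (g p)"
      using norm_parity_psi_sq_coeff_le[where k = "fst p" and N = "snd p"] g_nonneg[of p]
      by (simp add: g_def X_def case_prod_unfold)
  qed
  then show ?thesis
    unfolding case_prod_unfold by (simp only: summable_on_iff_abs_summable_on_complex)
qed

lemma sum_parity_psi_sq_coeff:
  "(\<Sum>k<j + N + 2. (-1)^k * psi_sq_coeff B C j t k N) =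
     (-1)^j * ((2 * \<i> * complex_of_real t)^N / fact N * jac_orbit B C j N j)"
proof -
  define c where "c n = (- \<i> * complex_of_real t)^n / fact n" for n
  have parity_c: "c n * cnj (c m) * (-1)^(n + j) = (-1)^j * ((\<i> * t)^n / fact n * ((\<i> * t)^m / fact m))" for n m
  proof -
    have "(-1)^n * (- \<i> * complex_of_real t)^n = (\<i> * t)^n"
      by (simp flip: power_mult_distrib)
    then show ?thesis
      by (simp add: c_def power_add mult_ac)
  qed
  have "(\<Sum>k<j + N + 2. (-1)^k * psi_sq_coeff B C j t k N) =
      (\<Sum>n\<le>N. c n * cnj (c (N - n)) * (\<Sum>k<j + N + 2. (-1)^k * jac_orbit B C j n k * jac_orbit B C j (N - n) k))"
    unfolding psi_sq_coeff_def psi_coeff_def sum_distrib_left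
    by (subst sum.swap) (simp add: c_def cnj_jac_orbit mult_ac)
  also have "\<dots> = (\<Sum>n\<le>N. c n * cnj (c (N - n)) * (-1)^(n + j) * jac_orbit B C j N j)"
  proof (intro sum.cong refl)
    fix n assume "n \<in> {..N}"
    then have "(\<Sum>k<j + N + 2. (-1)^k * jac_orbit B C j n k * jac_orbit B C j (N - n) k) =
        (-1)^(n + j) * jac_orbit B C j N j"
      using parity_sum_jac_orbit[of j n "N - n" "j + N + 2" B C] by simp
    then show "c n * cnj (c (N - n)) * (\<Sum>k<j + N + 2. (-1)^k * jac_orbit B C j n k * jac_orbit B C j (N - n) k) =
        c n * cnj (c (N - n)) * (-1)^(n + j) * jac_orbit B C j N j"
      by (simp add: mult.assoc)
  qed
  also have "\<dots> = (\<Sum>n\<le>N. (-1)^j * ((\<i> * t)^n / fact n * ((\<i> * t)^(N - n) / fact (N - n))) * jac_orbit B C j N j)"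
    by (simp only: parity_c)
  also have "\<dots> = (-1)^j * ((\<Sum>n\<le>N. (\<i> * t)^n / fact n * ((\<i> * t)^(N - n) / fact (N - n))) * jac_orbit B C j N j)"
    by (simp only: sum_distrib_left sum_distrib_right mult.assoc)
  also have "\<dots> = (-1)^j * ((\<i> * t + \<i> * t)^N / fact N * jac_orbit B C j N j)"
    by (simp only: sum_exp_coeffs)
  finally show ?thesis
    by (simp only: mult_2[symmetric] mult.assoc)
qed

lemma parity_psi_sq_coeff_has_sum:
  "((\<lambda>(k, N). (-1)^k * psi_sq_coeff B C j t k N) has_sum complex_of_real (parity_expect B C j t)) (UNIV \<times> UNIV)"
proof -
  define a where "a = (\<lambda>k. (-1)^k * (cmod (psi B C j t k))\<^sup>2)"
  obtain S where S: "((\<lambda>(k, N). (-1)^k * psi_sq_coeff B C j t k N) has_sum S) (UNIV \<times> UNIV)"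
    using summable_on_parity_psi_sq_coeff unfolding summable_on_def by blast
  have row: "((\<lambda>N. (-1)^k * psi_sq_coeff B C j t k N) has_sum complex_of_real (a k)) UNIV" for k
    unfolding a_def of_real_mult complex_norm_square
    using has_sum_cmult_right[OF psi_sq_coeff_has_sum[of B C j t k], of "(-1)^k"] by simp
  have "((\<lambda>k. complex_of_real (a k)) has_sum S) UNIV"
    by (rule has_sum_Sigma'[OF S]) (simp add: row)
  then have S_sums: "(\<lambda>k. complex_of_real (a k)) sums S"
    by (rule has_sum_imp_sums)
  then have a_sums: "a sums Re S"
    using sums_Re[OF S_sums] by simp
  then have "parity_expect B C j t = Re S"
    unfolding parity_expect_def a_def[symmetric] by (rule sums_unique[symmetric])
  moreover have "S = complex_of_real (Re S)"
    using sums_unique2[OF S_sums sums_of_real[OF a_sums]] .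
  ultimately show ?thesis
    using S by metis
qed

lemma parity_expect_eq_series:
  "parity_expect B C j t =
     (-1)^j * Re (\<Sum>N. (2 * \<i> * complex_of_real t)^N / fact N * jac_orbit B C j N j)"
proof -
  define a where "a N = (2 * \<i> * complex_of_real t)^N / fact N * jac_orbit B C j N j" for N
  have swapped: "((\<lambda>(N, k). (-1)^k * psi_sq_coeff B C j t k N) has_sum complex_of_real (parity_expect B C j t)) (UNIV \<times> UNIV)"
    using has_sum_swap[THEN iffD1, OF parity_psi_sq_coeff_has_sum[of B C j t]] by simp
  have column: "((\<lambda>k. (-1)^k * psi_sq_coeff B C j t k N) has_sum (-1)^j * a N) UNIV" for N
  proof -
    have "((\<lambda>k. (-1)^k * psi_sq_coeff B C j t k N) has_sum (\<Sum>k<j + N + 2. (-1)^k * psi_sq_coeff B C j t k N)) UNIV"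
      by (rule has_sum_finite_neutralI[where B = "{..<j + N + 2}"]) (auto simp: psi_sq_coeff_eq_0)
    then show ?thesis
      unfolding sum_parity_psi_sq_coeff a_def .
  qed
  have "((\<lambda>N. (-1)^j * a N) has_sum complex_of_real (parity_expect B C j t)) UNIV"
    by (rule has_sum_Sigma'[OF swapped]) (simp add: column)
  then have sums: "(\<lambda>N. (-1)^j * a N) sums complex_of_real (parity_expect B C j t)"
    by (rule has_sum_imp_sums)
  then have "summable a"
    using summable_cmult_iff[of "(-1)^j" a] sums_summable by force
  then have "(\<lambda>N. (-1)^j * a N) sums ((-1)^j * (\<Sum>N. a N))"
    by (intro sums_mult summable_sums)
  then have "complex_of_real (parity_expect B C j t) = (-1)^j * (\<Sum>N. a N)"
    using sums sums_unique2 by blast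
  then have "parity_expect B C j t = Re ((-1)^j * (\<Sum>N. a N))"
    by (metis Re_complex_of_real)
  then show ?thesis
    by (simp add: a_def)
qed

section \<open>Integrals over a period\<close>

lemma has_integral_holomorphic_circle:
  fixes F :: "complex \<Rightarrow> complex"
  assumes "F holomorphic_on cball 0 1"
  shows "((\<lambda>\<theta>. F (cis \<theta>)) has_integral (2 * pi * F 0)) {0..2*pi}"
proof -
  have "((\<lambda>z. F z / (z - 0)) has_contour_integral (2 * of_real pi * \<i> * F 0)) (circlepath 0 1)"
    by (rule Cauchy_integral_circlepath_simple) (use assms in auto)
  then have "((\<lambda>x. (2 * of_real pi * \<i>) * F (cis (2 * pi * x))) has_integral (2 * of_real pi * \<i>) * F 0) {0..1}"
    unfolding has_contour_integral vector_derivative_circlepath by (simp add: circlepath cis_conv_exp mult_ac)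
  from has_integral_mult_right[OF this, of "1 / (2 * of_real pi * \<i>)"]
  have "((\<lambda>x. F (cis (2 * pi * x))) has_integral F 0) (cbox 0 1)"
    by simp
  from has_integral_affinity[OF this, of "1 / (2*pi)" 0]
  show ?thesis
    by (simp add: image_mult_atLeastAtMost scaleR_conv_of_real)
qed

lemma has_integral_cis_int:
  "((\<lambda>\<theta>. cis (of_int m * \<theta>)) has_integral complex_of_real (if m = 0 then 2*pi else 0)) {0..2*pi}"
proof -
  have nat_case: "((\<lambda>\<theta>. cis (real n * \<theta>)) has_integral complex_of_real (if n = 0 then 2*pi else 0)) {0..2*pi}" for n
  proof -
    have "(\<lambda>z::complex. z ^ n) holomorphic_on cball 0 1"
      by (intro holomorphic_intros)
    from has_integral_holomorphic_circle[OF this, unfolded Complex.DeMoivre] show ?thesis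
      by (cases n) auto
  qed
  show ?thesis
  proof (cases "0 \<le> m")
    case True
    then show ?thesis
      using nat_case[of "nat m"] by simp
  next
    case False
    have "((\<lambda>\<theta>. cnj (cis (real (nat (- m)) * \<theta>))) has_integral complex_of_real (if m = 0 then 2*pi else 0)) {0..2*pi}"
      using has_integral_cnj[THEN iffD2, OF nat_case[of "nat (- m)"]] False by (simp add: o_def)
    then show ?thesis
      using False by (simp add: cis_cnj)
  qed
qed

lemma has_integral_cis_pair:
  "((\<lambda>\<theta>. cis ((real k - real l) * \<theta>) + cis ((real l - real k) * \<theta>)) has_integral
     complex_of_real (if k = l then 4*pi else 0)) {0..2*pi}"
proof -
  have "((\<lambda>\<theta>. cis (of_int (int k - int l) * \<theta>) + cis (of_int (int l - int k) * \<theta>)) has_integral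
      complex_of_real (if int k - int l = 0 then 2*pi else 0) + complex_of_real (if int l - int k = 0 then 2*pi else 0)) {0..2*pi}"
    by (intro has_integral_add has_integral_cis_int)
  then show ?thesis
    by (auto simp: of_int_diff cong: if_cong)
qed

lemma uniform_limit_exp_series:
  fixes f :: "real \<Rightarrow> real" and w :: "real \<Rightarrow> complex" and z :: complex
  assumes f: "continuous_on {a..b} f" and w: "continuous_on {a..b} w"
  shows "uniform_limit {a..b} (\<lambda>N x. \<Sum>n<N. z^n / fact n * (f x ^ n * w x))
    (\<lambda>x. exp (z * f x) * w x) sequentially"
proof -
  define u where "u n x = z^n / fact n * (f x ^ n * w x)" for n x
  obtain F where "0 \<le> F" and F: "\<And>x. x \<in> {a..b} \<Longrightarrow> norm (f x) \<le> F"
    using continuous_on_compact_bound[OF compact_Icc f] by blast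
  obtain W where W: "\<And>x. x \<in> {a..b} \<Longrightarrow> norm (w x) \<le> W"
    using continuous_on_compact_bound[OF compact_Icc w] by blast
  have "norm (u n x) \<le> (norm z * F)^n / fact n * W" if x: "x \<in> {a..b}" for n x
  proof -
    have "norm (u n x) = norm z ^ n / fact n * (norm (f x) ^ n * norm (w x))"
      by (simp add: u_def norm_mult norm_divide norm_power)
    also have "\<dots> \<le> norm z ^ n / fact n * (F ^ n * W)"
      using \<open>0 \<le> F\<close> by (intro mult_left_mono mult_mono power_mono F W x) auto
    finally show ?thesis
      by (simp add: power_mult_distrib)
  qed
  moreover have "summable (\<lambda>n. (norm z * F)^n / fact n * W)"
    by (intro summable_mult2 summable_power_div_fact)
  ultimately have uniform: "uniform_limit {a..b} (\<lambda>N x. \<Sum>n<N. u n x) (\<lambda>x. \<Sum>n. u n x) sequentially"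
    by (rule Weierstrass_m_test)
  have "(\<lambda>n. u n x) sums (exp (z * f x) * w x)" for x
  proof -
    have "(\<lambda>n. (z * f x)^n /\<^sub>R fact n * w x) sums (exp (z * f x) * w x)"
      by (intro sums_mult2 exp_converges)
    then show ?thesis
      by (simp add: u_def scaleR_conv_of_real divide_inverse power_mult_distrib mult_ac)
  qed
  then have "(\<lambda>x. \<Sum>n. u n x) = (\<lambda>x. exp (z * f x) * w x)"
    by (auto simp: sums_iff)
  with uniform show ?thesis
    by (simp add: u_def)
qed

lemma sums_integral_exp_series:
  fixes f :: "real \<Rightarrow> real" and w :: "real \<Rightarrow> complex" and z :: complex
  assumes f: "continuous_on {a..b} f" and w: "continuous_on {a..b} w"
    and moments: "\<And>n. ((\<lambda>x. f x ^ n * w x) has_integral m n) {a..b}"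
  shows "(\<lambda>n. z^n / fact n * m n) sums integral {a..b} (\<lambda>x. exp (z * f x) * w x)"
proof -
  have "continuous_on {a..b} (\<lambda>x. \<Sum>n<N. z^n / fact n * (f x ^ n * w x))" for N
    by (intro continuous_intros f w)
  then obtain I J where I: "\<And>N. ((\<lambda>x. \<Sum>n<N. z^n / fact n * (f x ^ n * w x)) has_integral I N) {a..b}"
      and J: "((\<lambda>x. exp (z * f x) * w x) has_integral J) {a..b}" and IJ: "I \<longlonglongrightarrow> J"
    using uniform_limit_integral[OF uniform_limit_exp_series[OF f w, where z = z]] by auto
  have "((\<lambda>x. \<Sum>n<N. z^n / fact n * (f x ^ n * w x)) has_integral (\<Sum>n<N. z^n / fact n * m n)) {a..b}" for N
    by (intro has_integral_sum finite_lessThan has_integral_mult_right moments)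
  then have "I = (\<lambda>N. \<Sum>n<N. z^n / fact n * m n)"
    using I has_integral_unique by blast
  with IJ J show ?thesis
    by (simp add: sums_def integral_unique)
qed

lemma has_vector_derivative_cis_cos:
  "((\<lambda>\<theta>. cis (s * cos \<theta>)) has_vector_derivative (- \<i> * complex_of_real (s * sin \<theta>) * cis (s * cos \<theta>))) (at \<theta>)"
proof -
  have cis_eq: "(\<lambda>\<theta>. cis (s * cos \<theta>)) = (\<lambda>\<theta>. cos (s * cos \<theta>) + \<i> * sin (s * cos \<theta>))"
    by (rule ext) (simp add: complex_eq_iff)
  show ?thesis
    unfolding cis_eq by (auto intro!: derivative_eq_intros simp: complex_eq_iff)
qed

text \<open>Since \<open>sin \<theta> cis (s cos \<theta>)\<close> is a derivative up to the factor \<open>- \<i> s\<close>, integration by parts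
  gives decay like \<open>1/s\<close>.\<close>

lemma norm_integral_cis_cos_sin_le:
  fixes G G' :: "real \<Rightarrow> real"
  assumes "a \<le> b" and G: "\<And>\<theta>. (G has_real_derivative G' \<theta>) (at \<theta>)"
    and G'_cont: "continuous_on {a..b} G'" and "G a = 0" and "G b = 0" and "0 < s"
  shows "norm (integral {a..b} (\<lambda>\<theta>. cis (s * cos \<theta>) * (sin \<theta> * G \<theta>)))
    \<le> integral {a..b} (\<lambda>\<theta>. \<bar>G' \<theta>\<bar>) / s"
proof -
  define E where "E \<theta> = cis (s * cos \<theta>)" for \<theta>
  from has_vector_derivative_mult[OF has_vector_derivative_cis_cos has_vector_derivative_of_real[OF G]]
  have "((\<lambda>\<theta>. E \<theta> * G \<theta>) has_vector_derivative
      (E \<theta> * G' \<theta> + (- \<i> * s) * (E \<theta> * (sin \<theta> * G \<theta>)))) (at \<theta>)" for \<theta>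
    by (simp add: E_def algebra_simps)
  then have parts: "((\<lambda>\<theta>. E \<theta> * G' \<theta> + (- \<i> * s) * (E \<theta> * (sin \<theta> * G \<theta>))) has_integral 0) {a..b}"
    using fundamental_theorem_of_calculus[OF \<open>a \<le> b\<close>, of "\<lambda>\<theta>. E \<theta> * G \<theta>"] \<open>G a = 0\<close> \<open>G b = 0\<close>
    by (simp add: has_vector_derivative_at_within)
  have "continuous_on {a..b} (\<lambda>\<theta>. E \<theta> * G' \<theta>)"
    unfolding E_def by (intro continuous_intros G'_cont)
  then have boundary: "((\<lambda>\<theta>. E \<theta> * G' \<theta>) has_integral integral {a..b} (\<lambda>\<theta>. E \<theta> * G' \<theta>)) {a..b}"
    using integrable_continuous_interval by blast
  have "((\<lambda>\<theta>. (- \<i> * s) * (E \<theta> * (sin \<theta> * G \<theta>))) has_integral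
      - integral {a..b} (\<lambda>\<theta>. E \<theta> * G' \<theta>)) {a..b}"
    using has_integral_diff[OF parts boundary] by simp
  from has_integral_mult_right[OF this, of "\<i> / s"]
  have "integral {a..b} (\<lambda>\<theta>. E \<theta> * (sin \<theta> * G \<theta>)) = \<i> / s * - integral {a..b} (\<lambda>\<theta>. E \<theta> * G' \<theta>)"
    using \<open>0 < s\<close> by (intro integral_unique) (simp add: mult.assoc[symmetric])
  then have "norm (integral {a..b} (\<lambda>\<theta>. E \<theta> * (sin \<theta> * G \<theta>))) = norm (integral {a..b} (\<lambda>\<theta>. E \<theta> * G' \<theta>)) / s"
    using \<open>0 < s\<close> by (simp add: norm_mult norm_divide)
  also have "\<dots> \<le> integral {a..b} (\<lambda>\<theta>. \<bar>G' \<theta>\<bar>) / s"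
  proof (intro divide_right_mono integral_norm_bound_integral)
    show "(\<lambda>\<theta>. E \<theta> * G' \<theta>) integrable_on {a..b}"
      using boundary by blast
    show "(\<lambda>\<theta>. \<bar>G' \<theta>\<bar>) integrable_on {a..b}"
      by (intro integrable_continuous_interval continuous_intros G'_cont)
  qed (use \<open>0 < s\<close> in \<open>auto simp: E_def norm_mult\<close>)
  finally show ?thesis
    by (simp add: E_def)
qed

section \<open>Generalized eigenfunctions and the spectral measure\<close>

locale jacobi_params =
  fixes B C :: real
  assumes B_pos: "0 < B" and C_pos: "0 < C" and C_less: "C < sqrt 2 * B"
begin

text \<open>The hypothesis \<open>C < sqrt 2 * B\<close> says exactly \<open>\<bar>rho\<bar> < 1\<close>, i.e. the Jost function has no zeros
  in the closed unit disc: \<open>H\<close> has no bound states.\<close>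

definition rho :: real where
  "rho = 1 - C\<^sup>2 / B\<^sup>2"

definition jost :: "real \<Rightarrow> complex" where
  "jost \<theta> = 1 + rho * cis (2 * \<theta>)"

definition scattering :: "real \<Rightarrow> complex" where
  "scattering \<theta> = cnj (jost \<theta>) / jost \<theta>"

definition eigfun_raw :: "nat \<Rightarrow> real \<Rightarrow> complex" where
  "eigfun_raw k \<theta> = cis (- (real k + 1) * \<theta>) - scattering \<theta> * cis ((real k + 1) * \<theta>)"

definition eigfun_sine :: "nat \<Rightarrow> real \<Rightarrow> real" where
  "eigfun_sine k \<theta> = sin ((real k + 1) * \<theta>) + rho * sin ((real k - 1) * \<theta>)"

definition eigfun_scale :: "nat \<Rightarrow> real" where
  "eigfun_scale k = (if k = 0 then B / C else 1)"

definition eigfun :: "nat \<Rightarrow> real \<Rightarrow> complex" where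
  "eigfun k \<theta> = eigfun_scale k * eigfun_raw k \<theta>"

lemma abs_rho_less_1: "\<bar>rho\<bar> < 1"
proof -
  have "C\<^sup>2 < (sqrt 2 * B)\<^sup>2"
    using C_less C_pos by (intro power_strict_mono) auto
  then have "C\<^sup>2 / B\<^sup>2 < 2"
    using B_pos by (simp add: power_mult_distrib divide_less_eq)
  moreover have "0 < C\<^sup>2 / B\<^sup>2"
    using B_pos C_pos by simp
  ultimately show ?thesis
    unfolding rho_def by auto
qed

lemma one_minus_rho: "1 - rho = C\<^sup>2 / B\<^sup>2"
  by (simp add: rho_def)

lemma jost_nonzero: "jost \<theta> \<noteq> 0"
proof
  assume "jost \<theta> = 0"
  then have "norm (rho * cis (2 * \<theta>)) = 1"
    unfolding jost_def by (metis add_eq_0_iff norm_minus_cancel norm_one)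
  then show False
    using abs_rho_less_1 by (simp add: norm_mult)
qed

lemma cnj_jost: "cnj (jost \<theta>) = 1 + rho * cis (- 2 * \<theta>)"
  by (simp add: jost_def cis_cnj)

lemma cnj_scattering_mult_self: "cnj (scattering \<theta>) * scattering \<theta> = 1"
  using jost_nonzero[of \<theta>] by (simp add: scattering_def)

lemma eigfun_raw_eq_sine: "eigfun_raw k \<theta> = -2 * \<i> * eigfun_sine k \<theta> / jost \<theta>"
proof -
  have cis1: "cis (- (real k + 1) * \<theta>) * cis (2 * \<theta>) = cis (- ((real k - 1) * \<theta>))"
    and cis2: "cis (- 2 * \<theta>) * cis ((real k + 1) * \<theta>) = cis ((real k - 1) * \<theta>)"
    by (simp_all add: cis_mult algebra_simps)
  have "eigfun_raw k \<theta> * jost \<theta> =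
      cis (- (real k + 1) * \<theta>) * jost \<theta> - cnj (jost \<theta>) * cis ((real k + 1) * \<theta>)"
    using jost_nonzero[of \<theta>] by (simp add: eigfun_raw_def scattering_def algebra_simps)
  also have "\<dots> = cis (- (real k + 1) * \<theta>) + rho * (cis (- (real k + 1) * \<theta>) * cis (2 * \<theta>))
      - cis ((real k + 1) * \<theta>) - rho * (cis (- 2 * \<theta>) * cis ((real k + 1) * \<theta>))"
    unfolding cnj_jost unfolding jost_def by algebra
  also have "\<dots> = cis (- ((real k + 1) * \<theta>)) + rho * cis (- ((real k - 1) * \<theta>))
      - cis ((real k + 1) * \<theta>) - rho * cis ((real k - 1) * \<theta>)"
    unfolding cis1 cis2 by (simp add: algebra_simps)
  also have "\<dots> = -2 * \<i> * eigfun_sine k \<theta>"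
    by (simp add: complex_eq_iff eigfun_sine_def cos_minus sin_minus del: minus_mult_left mult_minus_left)
  finally show ?thesis
    using jost_nonzero[of \<theta>] by (simp add: field_simps)
qed

lemma eigfun_sine_0: "eigfun_sine 0 \<theta> = (1 - rho) * sin \<theta>"
  by (simp add: eigfun_sine_def algebra_simps)

lemma eigfun_sine_1: "eigfun_sine 1 \<theta> = 2 * sin \<theta> * cos \<theta>"
  by (simp add: eigfun_sine_def sin_double)

lemma eigfun_sine_rec: "eigfun_sine k \<theta> + eigfun_sine (k + 2) \<theta> = 2 * cos \<theta> * eigfun_sine (k + 1) \<theta>"
proof -
  have sin_rec: "sin (a - \<theta>) + sin (a + \<theta>) = 2 * cos \<theta> * sin a" for a
    by (simp add: sin_add sin_diff)
  have "sin ((real k + 1) * \<theta>) + sin ((real (k + 2) + 1) * \<theta>) = 2 * cos \<theta> * sin ((real (k + 1) + 1) * \<theta>)"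
    using sin_rec[of "(real (k + 1) + 1) * \<theta>"] by (simp add: algebra_simps)
  moreover have "sin ((real k - 1) * \<theta>) + sin ((real (k + 2) - 1) * \<theta>) = 2 * cos \<theta> * sin ((real (k + 1) - 1) * \<theta>)"
    using sin_rec[of "(real (k + 1) - 1) * \<theta>"] by (simp add: algebra_simps)
  moreover have "eigfun_sine k \<theta> + eigfun_sine (k + 2) \<theta> =
      (sin ((real k + 1) * \<theta>) + sin ((real (k + 2) + 1) * \<theta>))
      + rho * (sin ((real k - 1) * \<theta>) + sin ((real (k + 2) - 1) * \<theta>))"
    by (simp add: eigfun_sine_def algebra_simps)
  ultimately show ?thesis
    by (simp add: eigfun_sine_def algebra_simps)
qed

lemma eigfun_raw_rec: "eigfun_raw k \<theta> + eigfun_raw (k + 2) \<theta> = of_real (2 * cos \<theta>) * eigfun_raw (k + 1) \<theta>"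
proof -
  have "eigfun_raw k \<theta> + eigfun_raw (k + 2) \<theta> =
      -2 * \<i> * of_real (eigfun_sine k \<theta> + eigfun_sine (k + 2) \<theta>) / jost \<theta>"
    using jost_nonzero[of \<theta>] by (simp add: eigfun_raw_eq_sine field_simps)
  then show ?thesis
    unfolding eigfun_sine_rec using jost_nonzero[of \<theta>] by (simp add: eigfun_raw_eq_sine field_simps)
qed

text \<open>The value of \<open>rho\<close> is forced by the boundary row \<open>l = 0\<close> of the eigenvalue equation.\<close>

lemma jac_apply_eigfun: "jac_apply B C (\<lambda>k. eigfun k \<theta>) l = 2 * B * cos \<theta> * eigfun l \<theta>"
proof -
  consider "l = 0" | "l = 1" | m where "l = m + 2"
    by (metis One_nat_def add_2_eq_Suc' not0_implies_Suc)
  then show ?thesis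
  proof cases
    case 1
    have "C * eigfun_raw 1 \<theta> = 2 * B * cos \<theta> * (B / C) * eigfun_raw 0 \<theta>"
      unfolding eigfun_raw_eq_sine eigfun_sine_0 eigfun_sine_1 one_minus_rho
      using B_pos C_pos by (simp add: field_simps power2_eq_square)
    then show ?thesis
      using 1 by (simp add: jac_apply_def jac_entry_def eigfun_def eigfun_scale_def mult_ac)
  next
    case 2
    have "B * (eigfun_raw 0 \<theta> + eigfun_raw (0 + 2) \<theta>) = B * (of_real (2 * cos \<theta>) * eigfun_raw 1 \<theta>)"
      using eigfun_raw_rec[of 0 \<theta>] by simp
    then show ?thesis
      using 2 C_pos
      by (simp add: jac_apply_def jac_entry_def eigfun_def eigfun_scale_def algebra_simps numeral_2_eq_2)
  next
    case 3
    have "B * (eigfun_raw (Suc m) \<theta> + eigfun_raw (Suc m + 2) \<theta>) = B * (of_real (2 * cos \<theta>) * eigfun_raw (Suc m + 1) \<theta>)"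
      using eigfun_raw_rec[of "Suc m" \<theta>] by simp
    then show ?thesis
      using 3
      by (simp add: jac_apply_def jac_entry_def eigfun_def eigfun_scale_def algebra_simps)
  qed
qed


lemma has_integral_scattering_cis:
  assumes q: "2 \<le> q"
  shows "((\<lambda>\<theta>. scattering \<theta> * cis (real q * \<theta>)) has_integral complex_of_real (if q = 2 then 2*pi*rho else 0)) {0..2*pi}"
proof -
  define F where "F z = (z\<^sup>2 + rho) * z^(q - 2) / (1 + rho * z\<^sup>2)" for z :: complex
  have denom_nonzero: "1 + rho * z\<^sup>2 \<noteq> 0" if "z \<in> cball 0 1" for z :: complex
  proof
    assume "1 + rho * z\<^sup>2 = 0"
    then have "norm (rho * z\<^sup>2) = 1"
      by (metis add_eq_0_iff norm_minus_cancel norm_one)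
    moreover have "norm (rho * z\<^sup>2) \<le> \<bar>rho\<bar>"
      using that mult_left_mono[of "(cmod z)\<^sup>2" 1 "\<bar>rho\<bar>"] by (simp add: norm_mult norm_power power_le_one)
    ultimately show False
      using abs_rho_less_1 by simp
  qed
  have holomorphic: "F holomorphic_on cball 0 1"
    unfolding F_def using denom_nonzero by (intro holomorphic_intros) auto
  have F_0: "2 * pi * F 0 = complex_of_real (if q = 2 then 2*pi*rho else 0)"
    using q by (auto simp: F_def)
  have F_cis: "F (cis \<theta>) = scattering \<theta> * cis (real q * \<theta>)" for \<theta>
  proof -
    have c1: "cis (2 * \<theta>) * cis ((real q - 2) * \<theta>) = cis (real q * \<theta>)"
      and c2: "cis (- 2 * \<theta>) * cis (real q * \<theta>) = cis ((real q - 2) * \<theta>)"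
      by (simp_all add: cis_mult algebra_simps)
    have "(cis (2 * \<theta>) + rho) * cis ((real q - 2) * \<theta>) =
        cis (2 * \<theta>) * cis ((real q - 2) * \<theta>) + rho * cis ((real q - 2) * \<theta>)"
      by (simp add: algebra_simps)
    also have "\<dots> = cis (real q * \<theta>) + rho * cis ((real q - 2) * \<theta>)"
      unfolding c1 by simp
    also have "\<dots> = cnj (jost \<theta>) * cis (real q * \<theta>)"
      unfolding c2[symmetric] cnj_jost by algebra
    finally have "(cis (2 * \<theta>) + rho) * cis ((real q - 2) * \<theta>) = cnj (jost \<theta>) * cis (real q * \<theta>)" .
    then show ?thesis
      unfolding F_def Complex.DeMoivre using q
      by (simp add: scattering_def jost_def of_nat_diff mult.commute)
  qed
  show ?thesis
    using has_integral_holomorphic_circle[OF holomorphic] unfolding F_cis F_0 .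
qed

lemma cnj_eigfun_raw_mult:
  "cnj (eigfun_raw k \<theta>) * eigfun_raw l \<theta> =
     cis ((real k - real l) * \<theta>) + cis ((real l - real k) * \<theta>)
     - scattering \<theta> * cis (real (k + l + 2) * \<theta>) - cnj (scattering \<theta> * cis (real (k + l + 2) * \<theta>))"
proof -
  have c1: "cis ((real k + 1) * \<theta>) * cis (- (real l + 1) * \<theta>) = cis ((real k - real l) * \<theta>)"
    and c2: "cis ((real k + 1) * \<theta>) * cis ((real l + 1) * \<theta>) = cis (real (k + l + 2) * \<theta>)"
    and c4: "cis (- (real k + 1) * \<theta>) * cis ((real l + 1) * \<theta>) = cis ((real l - real k) * \<theta>)"
    by (simp_all add: cis_mult algebra_simps)
  have c3: "cis (- (real k + 1) * \<theta>) * cis (- (real l + 1) * \<theta>) = cnj (cis (real (k + l + 2) * \<theta>))"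
    unfolding cis_mult cis_cnj by (rule arg_cong[where f = cis]) (simp add: algebra_simps)
  have "cnj (eigfun_raw k \<theta>) * eigfun_raw l \<theta> =
      cis ((real k + 1) * \<theta>) * cis (- (real l + 1) * \<theta>)
    - scattering \<theta> * (cis ((real k + 1) * \<theta>) * cis ((real l + 1) * \<theta>))
    - cnj (scattering \<theta>) * (cis (- (real k + 1) * \<theta>) * cis (- (real l + 1) * \<theta>))
    + (cnj (scattering \<theta>) * scattering \<theta>) * (cis (- (real k + 1) * \<theta>) * cis ((real l + 1) * \<theta>))"
    by (simp add: eigfun_raw_def cis_cnj algebra_simps)
  then show ?thesis
    unfolding c1 c2 c3 c4 cnj_scattering_mult_self by simp
qed

text \<open>The factor \<open>B / C\<close> in \<open>eigfun 0\<close> compensates the constant term \<open>2 pi rho\<close> of the scattering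
  integral, which only occurs for \<open>k = l = 0\<close>.\<close>

lemma has_integral_eigfun_orthonormal:
  "((\<lambda>\<theta>. cnj (eigfun k \<theta>) * eigfun l \<theta>) has_integral complex_of_real (if k = l then 4*pi else 0)) {0..2*pi}"
proof -
  define c where "c = (if k + l + 2 = 2 then 2*pi*rho else 0)"
  have q: "2 \<le> k + l + 2"
    by simp
  have "((\<lambda>\<theta>. cnj (scattering \<theta> * cis (real (k + l + 2) * \<theta>))) has_integral complex_of_real c) {0..2*pi}"
    using has_integral_cnj[THEN iffD2, OF has_integral_scattering_cis[OF q]]
    by (simp only: o_def complex_cnj_complex_of_real c_def)
  then have "((\<lambda>\<theta>. cnj (eigfun_raw k \<theta>) * eigfun_raw l \<theta>) has_integral
      (complex_of_real (if k = l then 4*pi else 0) - complex_of_real c - complex_of_real c)) {0..2*pi}"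
    unfolding cnj_eigfun_raw_mult c_def
    by (intro has_integral_diff has_integral_cis_pair has_integral_scattering_cis[OF q])
  from has_integral_mult_right[OF this, of "of_real (eigfun_scale k * eigfun_scale l)"]
  have "((\<lambda>\<theta>. cnj (eigfun k \<theta>) * eigfun l \<theta>) has_integral
      complex_of_real (eigfun_scale k * eigfun_scale l * ((if k = l then 4*pi else 0) - 2 * c))) {0..2*pi}"
    by (simp add: eigfun_def mult_ac)
  moreover have "eigfun_scale k * eigfun_scale l * ((if k = l then 4*pi else 0) - 2 * c) = (if k = l then 4*pi else 0)"
  proof (cases "k = 0 \<and> l = 0")
    case True
    have "(B / C) * (B / C) * (4*pi - 2 * (2*pi*rho)) = (B / C)\<^sup>2 * (4*pi*(1 - rho))"
      by (simp add: power2_eq_square algebra_simps)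
    also have "\<dots> = 4*pi"
      unfolding one_minus_rho using B_pos C_pos by (simp add: field_simps)
    finally show ?thesis
      using True by (simp add: eigfun_scale_def c_def)
  qed (auto simp: eigfun_scale_def c_def)
  ultimately show ?thesis
    by simp
qed


definition eigfun_transform :: "(nat \<Rightarrow> complex) \<Rightarrow> nat \<Rightarrow> real \<Rightarrow> complex" where
  "eigfun_transform v K \<theta> = (\<Sum>k<K. v k * eigfun k \<theta>)"

text \<open>Symmetry of \<open>H\<close> moves it onto the eigenfunctions; the truncation at \<open>K\<close> is harmless because
  \<open>v\<close> vanishes near \<open>K\<close>.\<close>

lemma eigfun_transform_jac_apply:
  assumes v: "\<forall>l. K \<le> Suc l \<longrightarrow> v l = 0"
  shows "eigfun_transform (jac_apply B C v) K \<theta> = 2 * B * cos \<theta> * eigfun_transform v K \<theta>"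
proof -
  have v': "\<forall>l\<ge>K. v l = 0"
    using v by auto
  have eigen: "v l * (\<Sum>k<K. of_real (jac_entry B C l k) * eigfun k \<theta>) = v l * (2 * B * cos \<theta> * eigfun l \<theta>)" for l
  proof (cases "v l = 0")
    case False
    then have "l + 2 \<le> K"
      using v by (metis add_2_eq_Suc' not_less_eq_eq)
    then show ?thesis
      using jac_apply_eigfun[of \<theta> l] jac_apply_eq_sum_if_interior[of l K B C "\<lambda>k. eigfun k \<theta>"] by simp
  qed simp
  have "eigfun_transform (jac_apply B C v) K \<theta> = (\<Sum>k<K. \<Sum>l<K. of_real (jac_entry B C k l) * v l * eigfun k \<theta>)"
    unfolding eigfun_transform_def jac_apply_eq_sum_if_vanishing[OF v'] by (simp add: sum_distrib_right)
  also have "\<dots> = (\<Sum>l<K. \<Sum>k<K. v l * (of_real (jac_entry B C l k) * eigfun k \<theta>))"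
  proof (subst sum.swap, intro sum.cong refl)
    fix k l
    show "of_real (jac_entry B C k l) * v l * eigfun k \<theta> = v l * (of_real (jac_entry B C l k) * eigfun k \<theta>)"
      by (simp add: jac_entry_commute[of B C k l])
  qed
  also have "\<dots> = (\<Sum>l<K. v l * (\<Sum>k<K. of_real (jac_entry B C l k) * eigfun k \<theta>))"
    by (simp add: sum_distrib_left)
  also have "\<dots> = (\<Sum>l<K. v l * (2 * B * cos \<theta> * eigfun l \<theta>))"
    by (simp only: eigen)
  also have "\<dots> = 2 * B * cos \<theta> * eigfun_transform v K \<theta>"
    by (simp add: eigfun_transform_def sum_distrib_left mult_ac)
  finally show ?thesis .
qed

lemma eigfun_transform_jac_orbit:
  assumes "j + n + 2 \<le> K"
  shows "eigfun_transform (jac_orbit B C j n) K \<theta> = (2 * B * cos \<theta>)^n * eigfun j \<theta>"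
  using assms
proof (induction n)
  case 0
  have "eigfun_transform (basis_vec j) K \<theta> = (\<Sum>k\<in>{j}. basis_vec j k * eigfun k \<theta>)"
    unfolding eigfun_transform_def by (rule sum.mono_neutral_right) (use 0 in \<open>auto simp: basis_vec_def\<close>)
  then show ?case
    unfolding jac_orbit_0 by (simp add: basis_vec_def[of j j])
next
  case (Suc n)
  have "eigfun_transform (jac_orbit B C j (Suc n)) K \<theta> = 2 * B * cos \<theta> * eigfun_transform (jac_orbit B C j n) K \<theta>"
    unfolding jac_orbit_Suc by (rule eigfun_transform_jac_apply) (use Suc.prems in \<open>auto intro!: jac_orbit_eq_0\<close>)
  then show ?case
    using Suc by simp
qed

definition spectral_weight :: "nat \<Rightarrow> real \<Rightarrow> complex" where
  "spectral_weight j \<theta> = cnj (eigfun j \<theta>) * eigfun j \<theta>"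

lemma has_integral_spectral_weight_moment:
  "((\<lambda>\<theta>. (2 * B * cos \<theta>)^n * spectral_weight j \<theta>) has_integral (4 * pi) * jac_orbit B C j n j) {0..2*pi}"
proof -
  define K where "K = j + n + 2"
  have "((\<lambda>\<theta>. \<Sum>k<K. jac_orbit B C j n k * (cnj (eigfun j \<theta>) * eigfun k \<theta>)) has_integral
      (\<Sum>k<K. jac_orbit B C j n k * complex_of_real (if j = k then 4*pi else 0))) {0..2*pi}"
    by (intro has_integral_sum finite_lessThan has_integral_mult_right has_integral_eigfun_orthonormal)
  moreover have "(\<Sum>k<K. jac_orbit B C j n k * complex_of_real (if j = k then 4*pi else 0)) = (4 * pi) * jac_orbit B C j n j"
    by (subst sum.mono_neutral_right[of "{..<K}" "{j}"]) (auto simp: K_def)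
  moreover have "(\<Sum>k<K. jac_orbit B C j n k * (cnj (eigfun j \<theta>) * eigfun k \<theta>)) = (2 * B * cos \<theta>)^n * spectral_weight j \<theta>" for \<theta>
  proof -
    have "(\<Sum>k<K. jac_orbit B C j n k * (cnj (eigfun j \<theta>) * eigfun k \<theta>)) =
        cnj (eigfun j \<theta>) * eigfun_transform (jac_orbit B C j n) K \<theta>"
      by (simp add: eigfun_transform_def sum_distrib_left mult_ac)
    then show ?thesis
      using eigfun_transform_jac_orbit[of j n K \<theta>] by (simp add: K_def spectral_weight_def mult_ac)
  qed
  ultimately show ?thesis
    by simp
qed


text \<open>\<open>eigfun_sine k \<theta> / sin \<theta>\<close> is a polynomial in \<open>cos \<theta>\<close> (a combination of Chebyshev polynomials of
  the second kind), so the spectral weight is \<open>sin \<theta>\<close> times the smooth function \<open>reduced_weight\<close>,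
  which vanishes at \<open>0\<close> and \<open>2 pi\<close>.\<close>

fun eigfun_poly :: "nat \<Rightarrow> real \<Rightarrow> real" where
  "eigfun_poly 0 \<theta> = 1 - rho"
| "eigfun_poly (Suc 0) \<theta> = 2 * cos \<theta>"
| "eigfun_poly (Suc (Suc k)) \<theta> = 2 * cos \<theta> * eigfun_poly (Suc k) \<theta> - eigfun_poly k \<theta>"

fun eigfun_poly_deriv :: "nat \<Rightarrow> real \<Rightarrow> real" where
  "eigfun_poly_deriv 0 \<theta> = 0"
| "eigfun_poly_deriv (Suc 0) \<theta> = - 2 * sin \<theta>"
| "eigfun_poly_deriv (Suc (Suc k)) \<theta> =
     - 2 * sin \<theta> * eigfun_poly (Suc k) \<theta> + 2 * cos \<theta> * eigfun_poly_deriv (Suc k) \<theta> - eigfun_poly_deriv k \<theta>"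

lemma eigfun_sine_eq_poly: "eigfun_sine k \<theta> = sin \<theta> * eigfun_poly k \<theta>"
proof (induction k \<theta> rule: eigfun_poly.induct)
  case (3 k \<theta>)
  have "eigfun_sine (Suc (Suc k)) \<theta> = 2 * cos \<theta> * eigfun_sine (Suc k) \<theta> - eigfun_sine k \<theta>"
    using eigfun_sine_rec[of k \<theta>] by simp
  then show ?case
    using 3 by (simp add: algebra_simps)
qed (simp_all add: eigfun_sine_0 eigfun_sine_1[unfolded One_nat_def] mult_ac)

lemma has_real_derivative_eigfun_poly: "(eigfun_poly k has_real_derivative eigfun_poly_deriv k \<theta>) (at \<theta>)"
proof (induction k \<theta> rule: eigfun_poly.induct)
  case 1
  have "eigfun_poly 0 = (\<lambda>\<theta>. 1 - rho)"
    by (rule ext) simp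
  then show ?case
    by simp
next
  case 2
  have "eigfun_poly (Suc 0) = (\<lambda>\<theta>. 2 * cos \<theta>)"
    by (rule ext) simp
  then show ?case
    by (auto intro!: derivative_eq_intros)
next
  case (3 k \<theta>)
  have "eigfun_poly (Suc (Suc k)) = (\<lambda>\<theta>. 2 * cos \<theta> * eigfun_poly (Suc k) \<theta> - eigfun_poly k \<theta>)"
    by (rule ext) simp
  then show ?case
    using 3 by (auto intro!: derivative_eq_intros simp: algebra_simps)
qed

lemma continuous_on_eigfun_poly: "continuous_on S (eigfun_poly k)"
  by (rule continuous_at_imp_continuous_on) (use DERIV_isCont[OF has_real_derivative_eigfun_poly] in blast)

lemma isCont_eigfun_poly_deriv: "isCont (eigfun_poly_deriv k) \<theta>"
proof (induction k \<theta> rule: eigfun_poly.induct)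
  case (3 k \<theta>)
  have "eigfun_poly_deriv (Suc (Suc k)) =
      (\<lambda>\<theta>. - 2 * sin \<theta> * eigfun_poly (Suc k) \<theta> + 2 * cos \<theta> * eigfun_poly_deriv (Suc k) \<theta> - eigfun_poly_deriv k \<theta>)"
    by (rule ext) simp
  then show ?case
    using 3 DERIV_isCont[OF has_real_derivative_eigfun_poly] by (auto intro!: continuous_intros)
qed (auto intro!: continuous_intros)

definition jost_norm_sq :: "real \<Rightarrow> real" where
  "jost_norm_sq \<theta> = 1 + 2 * rho * cos (2 * \<theta>) + rho\<^sup>2"

lemma cmod_jost_sq: "(cmod (jost \<theta>))\<^sup>2 = jost_norm_sq \<theta>"
proof -
  have "(cmod (jost \<theta>))\<^sup>2 = (1 + rho * cos (2 * \<theta>))\<^sup>2 + (rho * sin (2 * \<theta>))\<^sup>2"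
    by (simp add: jost_def cmod_power2)
  also have "\<dots> = 1 + 2 * rho * cos (2 * \<theta>) + rho\<^sup>2 * ((sin (2 * \<theta>))\<^sup>2 + (cos (2 * \<theta>))\<^sup>2)"
    by algebra
  finally show ?thesis
    by (simp add: jost_norm_sq_def)
qed

lemma jost_norm_sq_pos: "0 < jost_norm_sq \<theta>"
  using jost_nonzero[of \<theta>] cmod_jost_sq[of \<theta>] by (metis zero_less_norm_iff zero_less_power)

definition reduced_weight :: "nat \<Rightarrow> real \<Rightarrow> real" where
  "reduced_weight j \<theta> = 4 * (eigfun_scale j)\<^sup>2 * (sin \<theta> * (eigfun_poly j \<theta>)\<^sup>2 / jost_norm_sq \<theta>)"

definition reduced_weight_deriv :: "nat \<Rightarrow> real \<Rightarrow> real" where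
  "reduced_weight_deriv j \<theta> = 4 * (eigfun_scale j)\<^sup>2 *
     (((cos \<theta> * (eigfun_poly j \<theta>)\<^sup>2 + 2 * sin \<theta> * eigfun_poly j \<theta> * eigfun_poly_deriv j \<theta>) * jost_norm_sq \<theta>
        + sin \<theta> * (eigfun_poly j \<theta>)\<^sup>2 * (4 * rho * sin (2 * \<theta>))) / (jost_norm_sq \<theta>)\<^sup>2)"

lemma has_real_derivative_reduced_weight: "(reduced_weight j has_real_derivative reduced_weight_deriv j \<theta>) (at \<theta>)"
  unfolding reduced_weight_def[abs_def] jost_norm_sq_def[abs_def]
  using jost_norm_sq_pos[of \<theta>]
  by (auto intro!: derivative_eq_intros has_real_derivative_eigfun_poly
      simp: reduced_weight_deriv_def jost_norm_sq_def power2_eq_square field_simps)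

lemma continuous_on_reduced_weight_deriv: "continuous_on S (reduced_weight_deriv j)"
proof -
  have "continuous_on S jost_norm_sq" "continuous_on S (eigfun_poly_deriv j)"
    unfolding jost_norm_sq_def[abs_def]
    by (auto intro!: continuous_intros continuous_at_imp_continuous_on isCont_eigfun_poly_deriv)
  then show ?thesis
    unfolding reduced_weight_deriv_def[abs_def] using jost_norm_sq_pos
    by (auto intro!: continuous_intros continuous_on_eigfun_poly simp: less_imp_neq[symmetric])
qed

lemma spectral_weight_eq: "spectral_weight j \<theta> = complex_of_real (sin \<theta> * reduced_weight j \<theta>)"
proof -
  have "spectral_weight j \<theta> = (eigfun_scale j)\<^sup>2 * (cmod (eigfun_raw j \<theta>))\<^sup>2"
    using complex_norm_square[of "eigfun_raw j \<theta>"]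
    by (simp add: spectral_weight_def eigfun_def power2_eq_square mult_ac)
  also have "(cmod (eigfun_raw j \<theta>))\<^sup>2 = 4 * (eigfun_sine j \<theta>)\<^sup>2 / jost_norm_sq \<theta>"
    by (simp add: eigfun_raw_eq_sine norm_mult norm_divide power_divide power_mult_distrib cmod_jost_sq[symmetric])
  finally show ?thesis
    by (simp add: reduced_weight_def eigfun_sine_eq_poly power2_eq_square)
qed

lemma continuous_on_spectral_weight: "continuous_on S (spectral_weight j)"
proof -
  have "continuous_on S (reduced_weight j)"
    by (rule continuous_at_imp_continuous_on) (use DERIV_isCont[OF has_real_derivative_reduced_weight] in blast)
  then show ?thesis
    unfolding spectral_weight_eq[abs_def] by (intro continuous_intros)
qed


lemma sums_diag_exp_integral:
  "(\<lambda>N. (2 * \<i> * t)^N / fact N * jac_orbit B C j N j) sums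
     (integral {0..2*pi} (\<lambda>\<theta>. cis (4 * B * t * cos \<theta>) * spectral_weight j \<theta>) / (4 * pi))"
proof -
  have "(\<lambda>N. (2 * \<i> * t)^N / fact N * ((4 * pi) * jac_orbit B C j N j)) sums
      integral {0..2*pi} (\<lambda>\<theta>. exp (2 * \<i> * t * (2 * B * cos \<theta>)) * spectral_weight j \<theta>)"
    using has_integral_spectral_weight_moment
    by (intro sums_integral_exp_series continuous_on_spectral_weight continuous_intros) simp
  from sums_divide[OF this, of "4 * pi"] show ?thesis
    by (simp add: cis_conv_exp mult_ac)
qed

lemma abs_parity_expect_le:
  assumes "0 < t"
  shows "\<bar>parity_expect B C j t\<bar> \<le> integral {0..2*pi} (\<lambda>\<theta>. \<bar>reduced_weight_deriv j \<theta>\<bar>) / (16 * pi * B * t)"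
proof -
  define I where "I = integral {0..2*pi} (\<lambda>\<theta>. cis (4 * B * t * cos \<theta>) * spectral_weight j \<theta>)"
  have "\<bar>parity_expect B C j t\<bar> = \<bar>Re (I / (4 * pi))\<bar>"
    using parity_expect_eq_series[of B C j t] sums_unique[OF sums_diag_exp_integral[of t j]]
    by (simp add: I_def abs_mult)
  also have "\<dots> \<le> norm I / (4 * pi)"
    using abs_Re_le_cmod[of "I / (4 * pi)"] by (simp add: norm_divide)
  also have "norm I \<le> integral {0..2*pi} (\<lambda>\<theta>. \<bar>reduced_weight_deriv j \<theta>\<bar>) / (4 * B * t)"
    unfolding I_def spectral_weight_eq
    using B_pos \<open>0 < t\<close>
    by (intro norm_integral_cis_cos_sin_le has_real_derivative_reduced_weight continuous_on_reduced_weight_deriv)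
      (auto simp: reduced_weight_def)
  finally show ?thesis
    by (simp add: divide_right_mono field_simps)
qed

end

theorem theorem2:
  fixes B C :: real and j :: nat
  assumes "B > 0" and "0 < C" and "C < sqrt 2 * B"
  shows "((\<lambda>t. parity_expect B C j t) \<longlongrightarrow> 0) at_top"
proof -
  interpret jacobi_params B C
    using assms by unfold_locales
  define K where "K = integral {0..2*pi} (\<lambda>\<theta>. \<bar>reduced_weight_deriv j \<theta>\<bar>) / (16 * pi * B)"
  show ?thesis
  proof (rule Lim_null_comparison)
    show "\<forall>\<^sub>F t in at_top. norm (parity_expect B C j t) \<le> K / t"
      using eventually_gt_at_top[of 0]
      by eventually_elim (use abs_parity_expect_le in \<open>simp add: K_def\<close>)
    show "((\<lambda>t. K / t) \<longlongrightarrow> 0) at_top"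
      by (rule tendsto_divide_0[OF tendsto_const filterlim_at_top_imp_at_infinity[OF filterlim_ident]])
  qed
qed

end
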